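(* Let $B\ge2$ and $K$ an integer with $1\le K\le B/2$. Let $\mathcal Y\subseteq\mathbb{R}$ be bounded with $M=\sup\mathcal Y-\inf\mathcal Y>0$, and $\mathcal X\subseteq[\inf\mathcal Y,\sup\mathcal Y]^B$. Let $$\mathcal H_{BSF}=\Big\{x\in\mathcal X\mapsto w\,e\cdot x:\ w\in\{1,\tfrac12,\ldots,\tfrac1K\},\ e\in\{0,1\}^B,\ \textstyle\sum_{i=1}^Be_i=w^{-1}\Big\}.$$ Let $S=\{(x_1,y_1),\ldots,(x_n,y_n)\}$ be drawn i.i.d. from a distribution $\mathcal D$ on $\mathcal X\times\mathcal Y$. Then for any $\delta\in(0,1)$, with probability at least $1-\delta$, for all $h\in\mathcal H_{BSF}$, $$R(h)\le\widehat R_S(h)+M^2\sqrt{\frac{K\log B+\log\frac{1}{\delta\,(K-1)!}}{2n}}.$$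
   Context: $R(h)=\mathbb{E}_{(x,y)\sim\mathcal D}[(h(x)-y)^2]$ and $\widehat R_S(h)=\frac1n\sum_{i=1}^n(h(x_i)-y_i)^2$. Each $h\in\mathcal H_{BSF}$ is the uniform average of the predictions of a subset of at most $K$ of the $B$ trees of a forest; $x$ is the vector of tree predictions and $S$ is the validation set. *)

theory Defs
  imports "HOL-Probability.Probability"
begin

text \<open>Inputs x are vectors of B tree predictions, indexed by a finite type 'b with CARD('b) = B.\<close>

definition H_BSF :: "nat \<Rightarrow> ((real^'b) \<Rightarrow> real) set" where
  "H_BSF K = {h. \<exists>w e. w \<in> {1 / real k | k. k \<in> {1..K}} \<and> (\<forall>i. e i \<in> {0, 1::real})
      \<and> (\<Sum>i\<in>UNIV. e i) = 1 / w \<and> h = (\<lambda>x. w * (\<Sum>i\<in>UNIV. e i * x $ i))}"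

definition risk :: "((real^'b) \<times> real) measure \<Rightarrow> ((real^'b) \<Rightarrow> real) \<Rightarrow> real" where
  "risk D h = (\<integral>z. (h (fst z) - snd z)^2 \<partial>D)"

definition emp_risk :: "nat \<Rightarrow> (nat \<Rightarrow> (real^'b) \<times> real) \<Rightarrow> ((real^'b) \<Rightarrow> real) \<Rightarrow> real" where
  "emp_risk n S h = (1 / real n) * (\<Sum>i<n. (h (fst (S i)) - snd (S i))^2)"

end

theory Submission
  imports Defs
begin

text \<open>
  Every hypothesis in \<open>H_BSF K\<close> is the mean of the predictions over a set of between 1 and K
  trees, so there are at most \<open>\<Sum>k=1..K. B choose k \<le> B^K / (K-1)!\<close> of them; the last bound
  uses \<open>2K \<le> B\<close>, under which each term \<open>B^k/k!\<close> at least doubles the previous one.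
  Predictions and labels lie in \<open>[inf Y, sup Y]\<close>, so the squared loss lies in \<open>[0, M^2]\<close>.
  Hoeffding's inequality for the independent sample coordinates bounds the probability that a
  single hypothesis violates the bound by \<open>exp (-2 n t^2)\<close>, and the union bound over the finite
  class makes the total failure probability at most \<open>|H| exp (-2 n t^2) \<le> \<delta>\<close>.
\<close>

lemma indep_vars_PiM_components:
  assumes "\<And>i. i \<in> I \<Longrightarrow> prob_space (M i)"
  shows "prob_space.indep_vars (PiM I M) M (\<lambda>i \<omega>. \<omega> i) I"
proof -
  interpret P: prob_space "PiM I M" by (rule prob_space_PiM) (use assms in auto)
  show ?thesis
  proof (cases "I = {}")
    case True
    then show ?thesis unfolding P.indep_vars_def P.indep_sets_def by simp
  next
    case False
    have "distr (PiM I M) (PiM I M) (\<lambda>x. restrict x I) = distr (PiM I M) (PiM I M) (\<lambda>x. x)"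
      by (intro distr_cong) (auto simp: space_PiM PiE_def extensional_restrict)
    also have "\<dots> = PiM I (\<lambda>i. distr (PiM I M) (M i) (\<lambda>\<omega>. \<omega> i))"
      by (auto intro!: PiM_cong distr_PiM_component[symmetric] assms)
    finally show ?thesis
      by (subst P.indep_vars_iff_distr_eq_PiM'[OF False]) auto
  qed
qed

lemma empirical_mean_lower_tail:
  fixes D :: "'a measure" and l :: "'a \<Rightarrow> real"
  assumes D: "prob_space D" and l[measurable]: "l \<in> borel_measurable D"
    and bounded: "AE z in D. l z \<in> {0..c}" and "c > 0" and "n > 0" and "t \<ge> 0"
  defines "P \<equiv> PiM {..<n} (\<lambda>_. D)"
  shows "{\<omega> \<in> space P. (1 / real n) * (\<Sum>i<n. l (\<omega> i)) + c * t < (\<integral>z. l z \<partial>D)} \<in> sets P"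
    and "measure P {\<omega> \<in> space P. (1 / real n) * (\<Sum>i<n. l (\<omega> i)) + c * t < (\<integral>z. l z \<partial>D)}
           \<le> exp (- (2 * real n * t\<^sup>2))"
proof -
  interpret P: prob_space P unfolding P_def by (rule prob_space_PiM) (use D in auto)
  have coord[measurable]: "(\<lambda>\<omega>. \<omega> i) \<in> measurable P D" if "i \<in> {..<n}" for i
    using that unfolding P_def by (rule measurable_component_singleton)
  have distr_coord: "distr P D (\<lambda>\<omega>. \<omega> i) = D" if "i \<in> {..<n}" for i
    unfolding P_def using that D by (intro distr_PiM_component) auto
  define \<mu> where "\<mu> = (\<Sum>i<n. P.expectation (\<lambda>\<omega>. l (\<omega> i)))"
  have \<mu>: "\<mu> = real n * (\<integral>z. l z \<partial>D)"
    unfolding \<mu>_def by (simp add: integral_distr[symmetric, OF coord l] distr_coord)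
  interpret Hoeffding_ineq P "{..<n}" "\<lambda>i \<omega>. l (\<omega> i)" "\<lambda>_. 0" "\<lambda>_. c" \<mu>
  proof unfold_locales
    show "P.indep_vars (\<lambda>_. borel) (\<lambda>i \<omega>. l (\<omega> i)) {..<n}"
      using P.indep_vars_compose2[OF indep_vars_PiM_components[of "{..<n}" "\<lambda>_. D", folded P_def],
          of "\<lambda>_. l" "\<lambda>_. borel"] D by simp
    show "AE \<omega> in P. l (\<omega> i) \<in> {0..c}" if "i \<in> {..<n}" for i
      unfolding P_def using that D bounded by (intro AE_PiM_component) auto
  qed (simp_all add: \<mu>_def)
  let ?bad = "{\<omega> \<in> space P. (1 / real n) * (\<Sum>i<n. l (\<omega> i)) + c * t < (\<integral>z. l z \<partial>D)}"
  show "?bad \<in> sets P" by measurable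
  have "?bad \<subseteq> {\<omega> \<in> space P. (\<Sum>i<n. l (\<omega> i)) \<le> \<mu> - real n * c * t}"
    using \<open>n > 0\<close> by (auto simp: \<mu> field_simps)
  then have "measure P ?bad \<le> P.prob {\<omega> \<in> space P. (\<Sum>i<n. l (\<omega> i)) \<le> \<mu> - real n * c * t}"
    by (intro P.finite_measure_mono) measurable
  also have "\<dots> \<le> exp (-2 * (real n * c * t)\<^sup>2 / (\<Sum>i<n. (c - 0)\<^sup>2))"
    using \<open>n > 0\<close> \<open>c > 0\<close> \<open>t \<ge> 0\<close> by (intro Hoeffding_ineq_le) auto
  also have "-2 * (real n * c * t)\<^sup>2 / (\<Sum>i<n. (c - 0)\<^sup>2) = - (2 * real n * t\<^sup>2)"
    using \<open>n > 0\<close> \<open>c > 0\<close> by (simp add: power2_eq_square field_simps)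
  finally show "measure P ?bad \<le> exp (- (2 * real n * t\<^sup>2))" .
qed

lemma empirical_mean_uniform_bound_finite:
  fixes D :: "'a measure" and H :: "'h set" and l :: "'h \<Rightarrow> 'a \<Rightarrow> real"
  assumes D: "prob_space D" and "finite H"
    and l: "\<And>h. h \<in> H \<Longrightarrow> l h \<in> borel_measurable D"
    and bounded: "\<And>h. h \<in> H \<Longrightarrow> AE z in D. l h z \<in> {0..c}"
    and "c > 0" and "n > 0" and "t \<ge> 0"
  defines "P \<equiv> PiM {..<n} (\<lambda>_. D)"
  shows "measure P {\<omega> \<in> space P. \<forall>h\<in>H. (\<integral>z. l h z \<partial>D) \<le> (1 / real n) * (\<Sum>i<n. l h (\<omega> i)) + c * t}
           \<ge> 1 - real (card H) * exp (- (2 * real n * t\<^sup>2))"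
proof -
  interpret P: prob_space P unfolding P_def by (rule prob_space_PiM) (use D in auto)
  define bad where
    "bad h = {\<omega> \<in> space P. (1 / real n) * (\<Sum>i<n. l h (\<omega> i)) + c * t < (\<integral>z. l h z \<partial>D)}" for h
  have tail: "bad h \<in> sets P \<and> measure P (bad h) \<le> exp (- (2 * real n * t\<^sup>2))" if "h \<in> H" for h
    using empirical_mean_lower_tail[OF D l bounded \<open>c > 0\<close> \<open>n > 0\<close> \<open>t \<ge> 0\<close>] that
    unfolding bad_def P_def by blast
  have bad_sets: "(\<Union>h\<in>H. bad h) \<in> sets P"
    using tail \<open>finite H\<close> by (intro sets.finite_UN) auto
  have "measure P (\<Union>h\<in>H. bad h) \<le> (\<Sum>h\<in>H. measure P (bad h))"
    using tail \<open>finite H\<close> by (intro P.finite_measure_subadditive_finite) auto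
  also have "\<dots> \<le> real (card H) * exp (- (2 * real n * t\<^sup>2))"
    using tail by (intro sum_bounded_above) auto
  finally have "measure P (\<Union>h\<in>H. bad h) \<le> real (card H) * exp (- (2 * real n * t\<^sup>2))" .
  moreover have "{\<omega> \<in> space P. \<forall>h\<in>H. (\<integral>z. l h z \<partial>D) \<le> (1 / real n) * (\<Sum>i<n. l h (\<omega> i)) + c * t}
      = space P - (\<Union>h\<in>H. bad h)"
    by (auto simp: bad_def not_less)
  ultimately show ?thesis
    using P.prob_compl[OF bad_sets] by simp
qed

lemma exp_neg_confidence_radius:
  assumes "0 < \<delta>" and "\<delta> \<le> N" and "n > 0"
  shows "N * exp (- (2 * real n * (sqrt (ln (N / \<delta>) / (2 * real n)))\<^sup>2)) = \<delta>"
proof -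
  have "ln (N / \<delta>) \<ge> 0"
    using assms by simp
  then have "2 * real n * (sqrt (ln (N / \<delta>) / (2 * real n)))\<^sup>2 = ln (N / \<delta>)"
    using assms by simp
  then show ?thesis
    using assms by (simp add: exp_minus)
qed

lemma empirical_mean_uniform_confidence_bound_finite:
  fixes D :: "'a measure" and H :: "'h set" and l :: "'h \<Rightarrow> 'a \<Rightarrow> real"
  assumes D: "prob_space D" and "finite H"
    and l: "\<And>h. h \<in> H \<Longrightarrow> l h \<in> borel_measurable D"
    and bounded: "\<And>h. h \<in> H \<Longrightarrow> AE z in D. l h z \<in> {0..c}"
    and "c > 0" and "n > 0"
    and "real (card H) \<le> N" and "0 < \<delta>" and "\<delta> \<le> N"
  defines "P \<equiv> PiM {..<n} (\<lambda>_. D)"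
  shows "measure P {\<omega> \<in> space P. \<forall>h\<in>H. (\<integral>z. l h z \<partial>D)
           \<le> (1 / real n) * (\<Sum>i<n. l h (\<omega> i)) + c * sqrt (ln (N / \<delta>) / (2 * real n))}
           \<ge> 1 - \<delta>"
proof -
  define t where "t = sqrt (ln (N / \<delta>) / (2 * real n))"
  have "t \<ge> 0"
    using assms by (simp add: t_def)
  have "real (card H) * exp (- (2 * real n * t\<^sup>2)) \<le> N * exp (- (2 * real n * t\<^sup>2))"
    using \<open>real (card H) \<le> N\<close> by (rule mult_right_mono) simp
  also have "\<dots> = \<delta>"
    unfolding t_def using \<open>0 < \<delta>\<close> \<open>\<delta> \<le> N\<close> \<open>n > 0\<close> by (rule exp_neg_confidence_radius)
  finally have "1 - \<delta> \<le> 1 - real (card H) * exp (- (2 * real n * t\<^sup>2))"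
    by simp
  also have "\<dots> \<le> measure P {\<omega> \<in> space P. \<forall>h\<in>H. (\<integral>z. l h z \<partial>D) \<le> (1 / real n) * (\<Sum>i<n. l h (\<omega> i)) + c * t}"
    unfolding P_def by (rule empirical_mean_uniform_bound_finite) (use assms \<open>t \<ge> 0\<close> in auto)
  finally show ?thesis
    by (simp add: t_def)
qed

lemma sum_pow_div_fact_le_double:
  assumes "1 \<le> K" "2 * K \<le> B"
  shows "(\<Sum>k=1..K. real B ^ k / fact k) \<le> 2 * real B ^ K / fact K"
  using assms
proof (induction K rule: dec_induct)
  case base
  then show ?case by simp
next
  case (step m)
  then have IH: "(\<Sum>k=1..m. real B ^ k / fact k) \<le> 2 * real B ^ m / fact m"
    and "2 * real (Suc m) \<le> real B"
    by simp_all
  then have "2 * real (Suc m) * real B ^ m \<le> real B * real B ^ m"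
    by (intro mult_right_mono) auto
  then have "2 * real B ^ m / fact m \<le> real B ^ Suc m / fact (Suc m)"
    by (simp add: fact_Suc field_simps del: of_nat_Suc)
  moreover have "(\<Sum>k=1..Suc m. real B ^ k / fact k)
      = (\<Sum>k=1..m. real B ^ k / fact k) + real B ^ Suc m / fact (Suc m)"
    using step by simp
  moreover have "2 * real B ^ Suc m / fact (Suc m)
      = real B ^ Suc m / fact (Suc m) + real B ^ Suc m / fact (Suc m)"
    by (simp only: mult_2 add_divide_distrib)
  ultimately show ?case
    using IH by linarith
qed

lemma sum_pow_div_fact_le:
  assumes "1 \<le> K" "2 * K \<le> B"
  shows "(\<Sum>k=1..K. real B ^ k / fact k) \<le> real B ^ K / fact (K - 1)"
proof (cases "K = 1")
  case False
  then have "2 / real K \<le> 1" and "fact K = real K * fact (K - 1)"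
    using assms by (auto simp: fact_reduce)
  then have "2 * real B ^ K / fact K \<le> real B ^ K / fact (K - 1)"
    using assms by (simp add: field_simps mult_right_mono)
  with sum_pow_div_fact_le_double[OF assms] show ?thesis
    by linarith
qed simp

lemma sum_binomial_le_pow_div_fact:
  assumes "1 \<le> K" "2 * K \<le> B"
  shows "(\<Sum>k=1..K. real (B choose k)) \<le> real B ^ K / fact (K - 1)"
proof -
  have "real (B choose k) \<le> real B ^ k / fact k" for k
    using binomial_fact_pow[of B k]
    by (simp add: field_simps) (metis of_nat_fact of_nat_le_iff of_nat_mult of_nat_power)
  then have "(\<Sum>k=1..K. real (B choose k)) \<le> (\<Sum>k=1..K. real B ^ k / fact k)"
    by (intro sum_mono)
  with sum_pow_div_fact_le[OF assms] show ?thesis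
    by linarith
qed

lemma le_pow_div_fact:
  assumes "1 \<le> K" "2 * K \<le> B"
  shows "real B \<le> real B ^ K / fact (K - 1)"
proof -
  have "real B ^ 1 / fact 1 \<le> (\<Sum>k=1..K. real B ^ k / fact k)"
    using assms(1) by (intro member_le_sum) auto
  with sum_pow_div_fact_le[OF assms] show ?thesis
    by simp
qed

definition subset_mean :: "'b set \<Rightarrow> real^'b \<Rightarrow> real" where
  "subset_mean E x = (\<Sum>i\<in>E. x $ i) / real (card E)"

lemma H_BSF_subset_subset_means:
  "H_BSF K \<subseteq> subset_mean ` {E :: 'b::finite set. card E \<in> {1..K}}"
proof
  fix h :: "real^'b \<Rightarrow> real"
  assume "h \<in> H_BSF K"
  then obtain k e where k: "k \<in> {1..K}" and e: "\<forall>i. e i \<in> {0, 1::real}"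
    and sum_e: "(\<Sum>i\<in>UNIV. e i) = real k"
    and h: "h = (\<lambda>x. (1 / real k) * (\<Sum>i\<in>UNIV. e i * x $ i))"
    unfolding H_BSF_def by auto
  define E where "E = {i. e i = 1}"
  have e_indicator: "e i = (if i \<in> E then 1 else 0)" for i
    using e by (auto simp: E_def)
  have "card E = k"
    using sum_e by (simp add: e_indicator sum.If_cases)
  moreover have "(\<Sum>i\<in>UNIV. e i * x $ i) = (\<Sum>i\<in>E. x $ i)" for x
    by (simp add: e_indicator sum.If_cases if_distrib if_distribR)
  then have "h = subset_mean E"
    using \<open>card E = k\<close> by (simp add: h subset_mean_def fun_eq_iff)
  ultimately show "h \<in> subset_mean ` {E. card E \<in> {1..K}}"
    using k by blast
qed

lemma finite_H_BSF: "finite (H_BSF K :: (real^'b::finite \<Rightarrow> real) set)"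
  by (rule finite_subset[OF H_BSF_subset_subset_means]) simp

lemma card_H_BSF_le_sum_binomial:
  "card (H_BSF K :: (real^'b::finite \<Rightarrow> real) set) \<le> (\<Sum>k=1..K. CARD('b) choose k)"
proof -
  let ?subsets = "{E :: 'b set. card E \<in> {1..K}}"
  have "card (H_BSF K :: (real^'b \<Rightarrow> real) set) \<le> card (subset_mean ` ?subsets)"
    by (intro card_mono H_BSF_subset_subset_means) simp
  also have "\<dots> \<le> card ?subsets"
    by (rule card_image_le) simp
  also have "?subsets = (\<Union>k\<in>{1..K}. {E :: 'b set. card E = k})"
    by auto
  also have "card \<dots> = (\<Sum>k=1..K. card {E :: 'b set. card E = k})"
    by (rule card_UN_disjoint) auto
  also have "\<dots> = (\<Sum>k=1..K. CARD('b) choose k)"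
    using n_subsets[of "UNIV :: 'b set"] by simp
  finally show ?thesis .
qed

lemma subset_mean_mem_interval:
  assumes "E \<noteq> {}" and "\<And>i. x $ i \<in> {a..b}"
  shows "subset_mean E x \<in> {a..b}"
proof -
  have "real (card E) > 0"
    using assms(1) by (simp add: card_gt_0_iff)
  moreover have "real (card E) * a \<le> (\<Sum>i\<in>E. x $ i)" "(\<Sum>i\<in>E. x $ i) \<le> real (card E) * b"
    using sum_mono[of E "\<lambda>_. a" "\<lambda>i. x $ i"] sum_mono[of E "\<lambda>i. x $ i" "\<lambda>_. b"] assms(2)
    by auto
  ultimately show ?thesis
    by (simp add: subset_mean_def pos_le_divide_eq pos_divide_le_eq mult.commute)
qed

lemma H_BSF_mem_interval:
  assumes "h \<in> H_BSF K" and "\<And>i. x $ i \<in> {a..b}"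
  shows "h x \<in> {a..b}"
proof -
  have "h \<in> subset_mean ` {E. card E \<in> {1..K}}"
    using H_BSF_subset_subset_means assms(1) by (rule subsetD)
  then obtain E where "card E \<in> {1..K}" and h: "h = subset_mean E"
    by blast
  then have "E \<noteq> {}"
    by auto
  then show ?thesis
    unfolding h using assms(2) by (rule subset_mean_mem_interval)
qed

lemma H_BSF_squared_loss_borel_measurable:
  assumes "h \<in> H_BSF K"
  shows "(\<lambda>z. (h (fst z) - snd z)\<^sup>2) \<in> borel_measurable (borel :: ((real^'b) \<times> real) measure)"
proof -
  have "h \<in> subset_mean ` {E. card E \<in> {1..K}}"
    using H_BSF_subset_subset_means assms by (rule subsetD)
  then obtain E where "card E \<in> {1..K}" and h: "h = subset_mean E"
    by blast
  then show ?thesis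
    unfolding h subset_mean_def by (intro borel_measurable_continuous_onI continuous_intros) auto
qed

lemma card_H_BSF_le_pow_div_fact:
  assumes "1 \<le> K" "2 * K \<le> CARD('b::finite)"
  shows "real (card (H_BSF K :: (real^'b \<Rightarrow> real) set)) \<le> real CARD('b) ^ K / fact (K - 1)"
proof -
  have "real (card (H_BSF K :: (real^'b \<Rightarrow> real) set)) \<le> (\<Sum>k=1..K. real (CARD('b) choose k))"
    using card_H_BSF_le_sum_binomial[of K, where 'b = 'b] by (simp flip: of_nat_sum)
  also have "\<dots> \<le> real CARD('b) ^ K / fact (K - 1)"
    by (rule sum_binomial_le_pow_div_fact[OF assms])
  finally show ?thesis .
qed

lemma H_BSF_squared_loss_bounded:
  assumes "h \<in> H_BSF K" and "\<And>i. x $ i \<in> {a..b}" and "y \<in> {a..b}"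
  shows "(h x - y)\<^sup>2 \<in> {0..(b - a)\<^sup>2}"
proof -
  have "h x \<in> {a..b}"
    using assms(1,2) by (rule H_BSF_mem_interval)
  then have "\<bar>h x - y\<bar> \<le> \<bar>b - a\<bar>"
    using assms(3) by auto
  then show ?thesis
    by (simp add: abs_le_square_iff)
qed

theorem theorem5:
  fixes D :: "((real^'b) \<times> real) measure"
    and X :: "(real^'b) set" and Y :: "real set"
    and K n :: nat and \<delta> :: real
  assumes "CARD('b) \<ge> 2"
    and "1 \<le> K" and "2 * K \<le> CARD('b)"
    and "bounded Y" and "Sup Y - Inf Y > 0"
    and "X \<subseteq> {x. \<forall>i. x $ i \<in> {Inf Y .. Sup Y}}"
    and "prob_space D" and "sets D = sets borel"
    and "AE z in D. fst z \<in> X \<and> snd z \<in> Y"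
    and "n > 0"
    and "0 < \<delta>" and "\<delta> < 1"
  shows "measure (PiM {..<n} (\<lambda>_. D))
           {S \<in> space (PiM {..<n} (\<lambda>_. D)). \<forall>h\<in>H_BSF K.
              risk D h \<le> emp_risk n S h + (Sup Y - Inf Y)^2 *
                sqrt ((real K * ln (real CARD('b)) + ln (1 / (\<delta> * fact (K - 1)))) / (2 * real n))}
         \<ge> 1 - \<delta>"
proof -
  define N where "N = real CARD('b) ^ K / fact (K - 1)"
  have Y_range: "Y \<subseteq> {Inf Y..Sup Y}"
    using bounded_imp_bdd_below[OF \<open>bounded Y\<close>] bounded_imp_bdd_above[OF \<open>bounded Y\<close>]
    by (auto intro: cInf_lower cSup_upper)
  have loss_bounded: "AE z in D. (h (fst z) - snd z)\<^sup>2 \<in> {0..(Sup Y - Inf Y)\<^sup>2}" if "h \<in> H_BSF K" for h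
    using \<open>AE z in D. fst z \<in> X \<and> snd z \<in> Y\<close>
    by (rule eventually_mono) (use H_BSF_squared_loss_bounded[OF that] \<open>X \<subseteq> _\<close> Y_range in blast)
  have loss_measurable: "(\<lambda>z. (h (fst z) - snd z)\<^sup>2) \<in> borel_measurable D" if "h \<in> H_BSF K" for h
    using H_BSF_squared_loss_borel_measurable[OF that]
    by (simp add: measurable_cong_sets[OF \<open>sets D = sets borel\<close> refl])
  have "\<delta> \<le> N"
    using le_pow_div_fact[OF \<open>1 \<le> K\<close> \<open>2 * K \<le> CARD('b)\<close>] \<open>CARD('b) \<ge> 2\<close> \<open>\<delta> < 1\<close> by (simp add: N_def)
  moreover have "ln (N / \<delta>) = real K * ln (real CARD('b)) + ln (1 / (\<delta> * fact (K - 1)))"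
    using \<open>0 < \<delta>\<close> \<open>CARD('b) \<ge> 2\<close> by (simp add: N_def ln_div ln_mult ln_realpow)
  ultimately show ?thesis
    using empirical_mean_uniform_confidence_bound_finite[where l = "\<lambda>h z. (h (fst z) - snd z)\<^sup>2",
        OF \<open>prob_space D\<close> finite_H_BSF loss_measurable loss_bounded _ \<open>n > 0\<close>
        card_H_BSF_le_pow_div_fact[OF \<open>1 \<le> K\<close> \<open>2 * K \<le> CARD('b)\<close>, folded N_def] \<open>0 < \<delta>\<close>]
      \<open>Sup Y - Inf Y > 0\<close>
    by (simp add: risk_def emp_risk_def)
qed

end
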